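(* Let $N\ge1$ and let $\mathbf a\in\mathbb{R}^{N+1}$ have either all coordinates strictly positive or all coordinates strictly negative. Equip $T_{\mathbf e_{\mathbf a}}\Delta_N^0$ with the Euclidean scalar product $\langle\cdot,\cdot\rangle$ of $\mathbb{R}^{N+1}$, and define on $\Delta_N^0$ the scalar product $\langle\boldsymbol\lambda,\boldsymbol\mu\rangle_{\mathcal C_{\mathbf a}}=\langle\mathrm{Log}_{\mathcal C_{\mathbf a}}(\boldsymbol\lambda),\mathrm{Log}_{\mathcal C_{\mathbf a}}(\boldsymbol\mu)\rangle$, the norm $\|\boldsymbol\lambda\|_{\mathcal C_{\mathbf a}}=\sqrt{\langle\boldsymbol\lambda,\boldsymbol\lambda\rangle_{\mathcal C_{\mathbf a}}}$, and $d_{\mathcal C_{\mathbf a}}(\boldsymbol\lambda,\boldsymbol\mu)=\|\boldsymbol\lambda\ominus_{\mathcal C_{\mathbf a}}\boldsymbol\mu\|_{\mathcal C_{\mathbf a}}$, where $\boldsymbol\lambda\ominus_{\mathcal C_{\mathbf a}}\boldsymbol\mu=\boldsymbol\lambda\oplus_{\mathcal C_{\mathbf a}}((-1)\odot_{\mathcal C_{\mathbf a}}\boldsymbol\mu)$. Then $d_{\mathcal C_{\mathbf a}}$ is a distance on $\Delta_N^0$ and: (i) it is bi-invariant: $d_{\mathcal C_{\mathbf a}}(\boldsymbol\gamma\oplus_{\mathcal C_{\mathbf a}}\boldsymbol\lambda,\boldsymbol\gamma\oplus_{\mathcal C_{\mathbf a}}\boldsymbol\mu)=d_{\mathcal C_{\mathbf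 a}}(\boldsymbol\lambda,\boldsymbol\mu)$ for all $\boldsymbol\gamma,\boldsymbol\lambda,\boldsymbol\mu\in\Delta_N^0$; (ii) $\mathrm{Log}_{\mathcal C_{\mathbf a}}$ and $\mathrm{Exp}_{\mathcal C_{\mathbf a}}$ are linear isometries between $(\Delta_N^0,\langle\cdot,\cdot\rangle_{\mathcal C_{\mathbf a}})$ and $(T_{\mathbf e_{\mathbf a}}\Delta_N^0,\langle\cdot,\cdot\rangle)$; (iii) for all $\boldsymbol\lambda,\boldsymbol\mu\in\Delta_N^0$, $$d_{\mathcal C_{\mathbf a}}(\boldsymbol\lambda,\boldsymbol\mu)^2=\sum_{i=1}^{N+1}(\mathbf e_{\mathbf a})_i^2\left(\ln\frac{\lambda_i}{\mu_i}-\frac{a_i}{\sum_{k=1}^{N+1}a_k(\mathbf e_{\mathbf a})_k}\sum_{j=1}^{N+1}(\mathbf e_{\mathbf a})_j\ln\frac{\lambda_j}{\mu_j}\right)^2.$$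
   Context: $\mathbb{R}^{N+1}_{>0}$ is the open positive orthant with componentwise multiplication $\mathbf x\oplus\mathbf y=(x_iy_i)_i$ and neutral element $\mathbf 1=(1,\dots,1)$. $\Delta_N^0=\{\boldsymbol\lambda\in\mathbb{R}^{N+1}_{>0}\mid\sum_i\lambda_i=1\}$. For $\mathbf x\in\mathbb{R}^{N+1}_{>0}$ let $t_{\mathbf a}(\mathbf x)$ be the unique real $t$ with $\sum_ix_ie^{a_it}=1$ and $\mathcal C_{\mathbf a}(\mathbf x)=(x_ie^{a_it_{\mathbf a}(\mathbf x)})_i\in\Delta_N^0$. The abelian Lie group structure on $\Delta_N^0$ is $\boldsymbol\lambda\oplus_{\mathcal C_{\mathbf a}}\boldsymbol\mu=\mathcal C_{\mathbf a}(\boldsymbol\lambda\oplus\boldsymbol\mu)$, with neutral element $\mathbf e_{\mathbf a}=\mathcal C_{\mathbf a}(\mathbf 1)$ and Lie algebra $T_{\mathbf e_{\mathbf a}}\Delta_N^0=\{\boldsymbol\xi\in\mathbb{R}^{N+1}\mid\sum_i\xi_i=0\}$; $\mathrm{Exp}_{\mathcal C_{\mathbf a}}$ is its Lie group exponential map (a global diffeomorphism onto $\Delta_N^0$) and $\mathrm{Log}_{\mathcal C_{\mathbf a}}$ its inverse. The scalar multiplication is $c\odot_{\mathcal C_{\mathbf a}}\boldsymbol\lambda=\mathrm{Exp}_{\mathcal C_{\mathbf a}}(c\,\mathrm{Log}_{\mathcal C_{\mathbf a}}(\boldsymbol\lambda))$, which makes $(\Delta_N^0,\oplus_{\mathcal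 C_{\mathbf a}},\odot_{\mathcal C_{\mathbf a}})$ a real vector space. *)

theory Defs
  imports "HOL-Analysis.Analysis"
begin

text \<open>Vectors in R^(N+1) are modelled as real^'n with CARD('n) = N+1.\<close>

definition cmult :: "real^'n \<Rightarrow> real^'n \<Rightarrow> real^'n" where
  "cmult x y = (\<chi> i. x$i * y$i)"

definition simplex0 :: "(real^'n) set" where
  "simplex0 = {x. (\<forall>i. x$i > 0) \<and> (\<Sum>i\<in>UNIV. x$i) = 1}"

definition tangent0 :: "(real^'n) set" where
  "tangent0 = {\<xi>. (\<Sum>i\<in>UNIV. \<xi>$i) = 0}"

definition t_a :: "real^'n \<Rightarrow> real^'n \<Rightarrow> real" where
  "t_a a x = (THE t. (\<Sum>i\<in>UNIV. x$i * exp (a$i * t)) = 1)"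

definition Cl :: "real^'n \<Rightarrow> real^'n \<Rightarrow> real^'n" where
  "Cl a x = (\<chi> i. x$i * exp (a$i * t_a a x))"

definition oplusC :: "real^'n \<Rightarrow> real^'n \<Rightarrow> real^'n \<Rightarrow> real^'n" where
  "oplusC a l m = Cl a (cmult l m)"

definition eC :: "real^'n \<Rightarrow> real^'n" where
  "eC a = Cl a 1"

definition one_param :: "real^'n \<Rightarrow> real^'n \<Rightarrow> (real \<Rightarrow> real^'n) \<Rightarrow> bool" where
  "one_param a \<xi> \<gamma> \<longleftrightarrow> (\<forall>t. \<gamma> t \<in> simplex0) \<and> \<gamma> 0 = eC a \<and>
     (\<forall>s t. \<gamma> (s + t) = oplusC a (\<gamma> s) (\<gamma> t)) \<and>
     (\<gamma> has_vector_derivative \<xi>) (at 0)"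

definition ExpC :: "real^'n \<Rightarrow> real^'n \<Rightarrow> real^'n" where
  "ExpC a \<xi> = (THE l. \<exists>\<gamma>. one_param a \<xi> \<gamma> \<and> \<gamma> 1 = l)"

definition LogC :: "real^'n \<Rightarrow> real^'n \<Rightarrow> real^'n" where
  "LogC a l = inv_into tangent0 (ExpC a) l"

definition smultC :: "real^'n \<Rightarrow> real \<Rightarrow> real^'n \<Rightarrow> real^'n" where
  "smultC a c l = ExpC a (c *\<^sub>R LogC a l)"

definition ominusC :: "real^'n \<Rightarrow> real^'n \<Rightarrow> real^'n \<Rightarrow> real^'n" where
  "ominusC a l m = oplusC a l (smultC a (-1) m)"

definition innerC :: "real^'n \<Rightarrow> real^'n \<Rightarrow> real^'n \<Rightarrow> real" where
  "innerC a l m = LogC a l \<bullet> LogC a m"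

definition normC :: "real^'n \<Rightarrow> real^'n \<Rightarrow> real" where
  "normC a l = sqrt (innerC a l l)"

definition distC :: "real^'n \<Rightarrow> real^'n \<Rightarrow> real^'n \<Rightarrow> real" where
  "distC a l m = normC a (ominusC a l m)"

end

theory Submission
  imports Defs
begin

text \<open>
  Put \<open>e = e\<^sub>a\<close> and \<open>A = \<Sum>\<^sub>k a\<^sub>k e\<^sub>k\<close> (nonzero because all \<open>a\<^sub>k\<close> have the same sign).
  The map \<open>log_chart x = (e\<^sub>i (ln x\<^sub>i - a\<^sub>i/A \<Sum>\<^sub>j e\<^sub>j ln x\<^sub>j))\<^sub>i\<close> is blind to the rescalings
  \<open>x\<^sub>i \<mapsto> x\<^sub>i exp (a\<^sub>i s)\<close> performed by \<open>C\<^sub>a\<close>, turns componentwise products into sums and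
  maps the simplex bijectively onto the tangent space, with inverse
  \<open>exp_chart \<xi> = C\<^sub>a (exp (\<xi>\<^sub>i / e\<^sub>i))\<^sub>i\<close>. So \<open>t \<mapsto> exp_chart (t \<xi>)\<close> is a one-parameter
  subgroup. Its velocity at 0 is \<open>\<xi>\<close> because the normalising time along it is stationary:
  by convexity of \<open>exp\<close> it moves by at most a constant times
  \<open>\<Sum>\<^sub>i e\<^sub>i exp (t \<xi>\<^sub>i / e\<^sub>i) - 1 = o(t)\<close>. Conversely, \<open>log_chart\<close> turns any one-parameter
  subgroup into an additive differentiable curve, i.e. a line. Hence \<open>Exp = exp_chart\<close> and
  \<open>Log = log_chart\<close>, and every claim is the Euclidean structure of the tangent space
  transported by the group isomorphism \<open>log_chart\<close>.
\<close>

section \<open>One-variable calculus\<close>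

lemma has_vector_derivative_cart_componentwise:
  fixes f :: "real \<Rightarrow> real^'n"
  assumes "\<And>i. ((\<lambda>t. f t $ i) has_real_derivative v $ i) (at x)"
  shows "(f has_vector_derivative v) (at x)"
  unfolding has_vector_derivative_def
proof (subst has_derivative_componentwise_within, intro ballI)
  fix b :: "real^'n" assume "b \<in> Basis"
  then obtain i where b: "b = axis i 1" by (auto simp: Basis_vec_def)
  show "((\<lambda>t. f t \<bullet> b) has_derivative (\<lambda>h. (h *\<^sub>R v) \<bullet> b)) (at x)"
    using assms[of i] by (simp add: b inner_axis has_field_derivative_def mult_commute_abs)
qed

lemma additive_has_vector_derivative_imp_linear:
  fixes f :: "real \<Rightarrow> 'a::real_normed_vector"
  assumes add: "\<And>s t. f (s + t) = f s + f t"
    and deriv: "(f has_vector_derivative v) (at 0)"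
  shows "f t = t *\<^sub>R v"
proof -
  have f0: "f 0 = 0" using add[of 0 0] by simp
  have "((\<lambda>t. f t - t *\<^sub>R v) has_vector_derivative 0) (at x)" for x
  proof -
    have "((\<lambda>h. f h + f x) has_vector_derivative v) (at 0)"
      using deriv by (auto intro!: derivative_eq_intros)
    then have "((\<lambda>h. f (x + h)) has_vector_derivative v) (at 0)"
      by (simp add: add add.commute)
    moreover have "((\<lambda>t. t - x) has_vector_derivative 1) (at x)"
      by (auto intro!: derivative_eq_intros)
    ultimately have "(f has_vector_derivative v) (at x)"
      using vector_diff_chain_at[of "\<lambda>t. t - x" 1 x "\<lambda>h. f (x + h)" v] by (simp add: o_def)
    then show ?thesis by (auto intro!: derivative_eq_intros)
  qed
  then obtain c where "\<And>x. f x - x *\<^sub>R v = c"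
    by (rule has_vector_derivative_zero_constant[of UNIV, simplified]) blast
  from this[of t] this[of 0] f0 show ?thesis by simp
qed

lemma has_real_derivative_zero_if_dominated:
  assumes dom: "\<And>t. \<bar>f t - f x\<bar> \<le> \<bar>g t - g x\<bar>"
    and g: "(g has_real_derivative 0) (at x)"
  shows "(f has_real_derivative 0) (at x)"
  unfolding has_field_derivative_iff
proof (rule Lim_null_comparison)
  show "\<forall>\<^sub>F t in at x. norm ((f t - f x) / (t - x)) \<le> \<bar>(g t - g x) / (t - x)\<bar>"
    using dom by (simp add: divide_right_mono)
  show "((\<lambda>t. \<bar>(g t - g x) / (t - x)\<bar>) \<longlongrightarrow> 0) (at x)"
    using g unfolding has_field_derivative_iff by (rule tendsto_rabs_zero)
qed

section \<open>Normalisation onto the simplex\<close>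

lemma sum_exp_strict_mono:
  fixes a x :: "real^'n"
  assumes "\<And>i. a$i > 0" and "\<And>i. x$i > 0"
  shows "strict_mono (\<lambda>t. \<Sum>i\<in>UNIV. x$i * exp (a$i * t))"
  by (rule strict_monoI, rule sum_strict_mono) (use assms in auto)

lemma sum_exp_eq_1_exists:
  fixes a x :: "real^'n"
  assumes a: "\<And>i. a$i > 0" and x: "\<And>i. x$i > 0"
  shows "\<exists>t. (\<Sum>i\<in>UNIV. x$i * exp (a$i * t)) = 1"
proof -
  define f where "f t = (\<Sum>i\<in>UNIV. x$i * exp (a$i * t))" for t
  define S where "S = (\<Sum>i\<in>UNIV. x$i)"
  define \<mu> where "\<mu> = Min (range (\<lambda>i. a$i))"
  define L where "L = \<bar>ln S\<bar> / \<mu>"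
  have S: "S > 0" unfolding S_def using x by (intro sum_pos) auto
  have \<mu>: "\<mu> > 0" "\<mu> \<le> a$i" for i using a by (auto simp: \<mu>_def)
  have L: "L \<ge> 0" using \<mu> by (simp add: L_def)
  have "f (- L) \<le> (\<Sum>i\<in>UNIV. x$i * exp (- \<mu> * L))"
    unfolding f_def using \<mu> L x
    by (intro sum_mono mult_left_mono) (auto intro: mult_right_mono less_imp_le)
  also have "\<dots> = S * exp (- \<bar>ln S\<bar>)" using \<mu> by (simp add: S_def L_def sum_distrib_right)
  also have "\<dots> \<le> S * exp (- ln S)" using S by (intro mult_left_mono) auto
  finally have low: "f (- L) \<le> 1" using S by (simp add: exp_minus)
  have "S * exp (- ln S) \<le> S * exp \<bar>ln S\<bar>" using S by (intro mult_left_mono) auto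
  also have "\<dots> = (\<Sum>i\<in>UNIV. x$i * exp (\<mu> * L))" using \<mu> by (simp add: S_def L_def sum_distrib_right)
  also have "\<dots> \<le> f L"
    unfolding f_def using \<mu> L x
    by (intro sum_mono mult_left_mono) (auto intro: mult_right_mono less_imp_le)
  finally have high: "1 \<le> f L" using S by (simp add: exp_minus)
  have "continuous_on {-L..L} f" unfolding f_def by (intro continuous_intros)
  then obtain t where "f t = 1" using IVT'[of f "-L" 1 L] low high L by auto
  then show ?thesis unfolding f_def by blast
qed

locale sign_definite =
  fixes a :: "real^'n"
  assumes sign_definite: "(\<forall>i. a$i > 0) \<or> (\<forall>i. a$i < 0)"
begin

lemma abs_weights_lower_bound:
  obtains \<mu> where "\<mu> > 0" and "\<And>i. \<mu> \<le> \<bar>a$i\<bar>"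
proof
  have "a$i \<noteq> 0" for i using sign_definite by (metis less_irrefl)
  then show "Min (range (\<lambda>i. \<bar>a$i\<bar>)) > 0" by simp
qed simp

lemma sum_exp_eq_1_ex1:
  assumes x: "\<And>i. x$i > 0"
  shows "\<exists>!t. (\<Sum>i\<in>UNIV. x$i * exp (a$i * t)) = 1"
proof -
  define f where "f b = (\<lambda>t. \<Sum>i\<in>UNIV. x$i * exp (b$i * t))" for b :: "real^'n"
  have reflect: "f a t = f (- a) (- t)" for t by (simp add: f_def)
  have "inj (f a) \<and> (\<exists>t. f a t = 1)"
  proof (cases "\<forall>i. a$i > 0")
    case True
    then show ?thesis
      using sum_exp_strict_mono[of a x] sum_exp_eq_1_exists[of a x] x
      by (auto simp: f_def intro: strict_mono_imp_inj_on)
  next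
    case False
    with sign_definite have neg: "(-a)$i > 0" for i by auto
    have "inj (f (- a))" using sum_exp_strict_mono[of "-a" x] neg x
      by (auto simp: f_def intro: strict_mono_imp_inj_on)
    moreover obtain t where "f (- a) t = 1" using sum_exp_eq_1_exists[of "-a" x] neg x by (auto simp: f_def)
    ultimately show ?thesis
      by (metis (no_types, lifting) injD injI minus_minus reflect)
  qed
  then show ?thesis unfolding f_def inj_def by auto
qed

lemma t_a_eq: "(\<And>i. x$i > 0) \<Longrightarrow> (\<Sum>i\<in>UNIV. x$i * exp (a$i * t_a a x)) = 1"
  unfolding t_a_def by (rule theI') (rule sum_exp_eq_1_ex1)

lemma t_a_unique: "(\<And>i. x$i > 0) \<Longrightarrow> (\<Sum>i\<in>UNIV. x$i * exp (a$i * t)) = 1 \<Longrightarrow> t_a a x = t"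
  unfolding t_a_def by (rule the1_equality) (rule sum_exp_eq_1_ex1)

lemma Cl_in_simplex0: "(\<And>i. x$i > 0) \<Longrightarrow> Cl a x \<in> simplex0"
  using t_a_eq by (simp add: simplex0_def Cl_def)

lemma Cl_mult_exp:
  assumes x: "\<And>i. x$i > 0"
  shows "Cl a (\<chi> i. x$i * exp (a$i * s)) = Cl a x"
proof -
  have "(\<Sum>i\<in>UNIV. x$i * exp (a$i * s) * exp (a$i * (t_a a x - s))) = 1"
    using t_a_eq[OF x] by (simp add: mult.assoc flip: exp_add) (simp add: algebra_simps)
  then have "t_a a (\<chi> i. x$i * exp (a$i * s)) = t_a a x - s"
    using x by (intro t_a_unique) auto
  then show ?thesis by (simp add: Cl_def vec_eq_iff mult.assoc flip: exp_add) (simp add: algebra_simps)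
qed

lemma Cl_simplex0: "l \<in> simplex0 \<Longrightarrow> Cl a l = l"
  by (subgoal_tac "t_a a l = 0") (auto simp: Cl_def simplex0_def intro: t_a_unique)

lemma oplusC_Cl:
  assumes "\<And>i. x$i > 0" and "\<And>i. y$i > 0"
  shows "oplusC a (Cl a x) (Cl a y) = Cl a (cmult x y)"
proof -
  have "cmult (Cl a x) (Cl a y) = (\<chi> i. cmult x y $ i * exp (a$i * (t_a a x + t_a a y)))"
    by (simp add: cmult_def Cl_def vec_eq_iff algebra_simps flip: exp_add)
  then show ?thesis
    using Cl_mult_exp[of "cmult x y"] assms by (simp add: oplusC_def cmult_def)
qed

lemma oplusC_in_simplex0: "l \<in> simplex0 \<Longrightarrow> m \<in> simplex0 \<Longrightarrow> oplusC a l m \<in> simplex0"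
  unfolding oplusC_def by (rule Cl_in_simplex0) (simp add: cmult_def simplex0_def)

lemma eC_in_simplex0: "eC a \<in> simplex0"
  unfolding eC_def by (rule Cl_in_simplex0) simp

lemma eC_pos: "eC a $ i > 0"
  using eC_in_simplex0 by (simp add: simplex0_def)

lemma eC_nth: "eC a $ i = exp (a$i * t_a a 1)"
  by (simp add: eC_def Cl_def)

lemma eC_weight_nonzero: "(\<Sum>k\<in>UNIV. a$k * eC a $ k) \<noteq> 0"
  using sign_definite
proof
  assume "\<forall>i. a$i > 0"
  then have "(\<Sum>k\<in>UNIV. a$k * eC a $ k) > 0" using eC_pos by (intro sum_pos) auto
  then show ?thesis by simp
next
  assume "\<forall>i. a$i < 0"
  then have "(\<Sum>k\<in>UNIV. - a$k * eC a $ k) > 0" using eC_pos by (intro sum_pos) (auto intro: mult_neg_pos)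
  then show ?thesis by (simp add: sum_negf)
qed

end

section \<open>Explicit charts of the simplex\<close>

definition log_chart :: "real^'n \<Rightarrow> real^'n \<Rightarrow> real^'n" where
  "log_chart a x = (\<chi> i. eC a $ i * (ln (x$i) - a$i / (\<Sum>k\<in>UNIV. a$k * eC a $ k) *
                                       (\<Sum>j\<in>UNIV. eC a $ j * ln (x$j))))"

definition exp_chart :: "real^'n \<Rightarrow> real^'n \<Rightarrow> real^'n" where
  "exp_chart a \<xi> = Cl a (\<chi> i. exp (\<xi>$i / eC a $ i))"

lemma tangent0_add: "\<xi> \<in> tangent0 \<Longrightarrow> \<eta> \<in> tangent0 \<Longrightarrow> \<xi> + \<eta> \<in> tangent0"
  by (simp add: tangent0_def sum.distrib)

lemma tangent0_scaleR: "\<xi> \<in> tangent0 \<Longrightarrow> c *\<^sub>R \<xi> \<in> tangent0"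
  by (simp add: tangent0_def flip: sum_distrib_left)

context sign_definite
begin

lemma log_chart_mult_exp:
  assumes x: "\<And>i. x$i > 0"
  shows "log_chart a (\<chi> i. x$i * exp (a$i * s)) = log_chart a x"
proof -
  define A where "A = (\<Sum>k\<in>UNIV. a$k * eC a $ k)"
  have ln_mult: "ln (x$j * exp (a$j * s)) = ln (x$j) + a$j * s" for j
    using x[of j] by (simp add: ln_mult_pos)
  have sum: "(\<Sum>j\<in>UNIV. eC a $ j * (ln (x$j) + a$j * s)) = (\<Sum>j\<in>UNIV. eC a $ j * ln (x$j)) + s * A"
    by (simp add: A_def sum.distrib algebra_simps sum_distrib_left)
  show ?thesis
    using eC_weight_nonzero
    by (simp add: log_chart_def vec_eq_iff ln_mult sum A_def[symmetric]) (simp add: field_simps)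
qed

lemma log_chart_Cl: "(\<And>i. x$i > 0) \<Longrightarrow> log_chart a (Cl a x) = log_chart a x"
  unfolding Cl_def by (rule log_chart_mult_exp)

lemma log_chart_cmult:
  assumes x: "\<And>i. x$i > 0" and y: "\<And>i. y$i > 0"
  shows "log_chart a (cmult x y) = log_chart a x + log_chart a y"
proof -
  have ln_mult: "ln (x$j * y$j) = ln (x$j) + ln (y$j)" for j
    using x[of j] y[of j] by (simp add: ln_mult_pos)
  show ?thesis
    by (simp add: log_chart_def cmult_def vec_eq_iff ln_mult sum.distrib algebra_simps)
qed

lemma log_chart_in_tangent0: "log_chart a x \<in> tangent0"
proof -
  define A where "A = (\<Sum>k\<in>UNIV. a$k * eC a $ k)"
  define S where "S = (\<Sum>j\<in>UNIV. eC a $ j * ln (x$j))"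
  have A: "A \<noteq> 0" unfolding A_def by (rule eC_weight_nonzero)
  have "(\<Sum>i\<in>UNIV. eC a $ i * (a$i / A * S)) = (\<Sum>i\<in>UNIV. a$i * eC a $ i) * (S / A)"
    by (simp add: sum_distrib_left sum_divide_distrib mult_ac)
  also have "\<dots> = S" using A by (simp flip: A_def)
  finally have "(\<Sum>i\<in>UNIV. eC a $ i * (ln (x$i) - a$i / A * S)) = 0"
    by (simp add: right_diff_distrib sum_subtractf S_def)
  then show ?thesis by (simp add: tangent0_def log_chart_def S_def A_def)
qed

lemma log_chart_exp:
  assumes "\<xi> \<in> tangent0"
  shows "log_chart a (\<chi> i. exp (\<xi>$i / eC a $ i)) = \<xi>"
proof -
  have "(\<Sum>j\<in>UNIV. eC a $ j * (\<xi>$j / eC a $ j)) = 0"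
    using assms eC_pos by (simp add: tangent0_def less_imp_neq[symmetric])
  then show ?thesis using eC_pos by (simp add: log_chart_def vec_eq_iff less_imp_neq[symmetric])
qed

lemma exp_chart_in_simplex0: "exp_chart a \<xi> \<in> simplex0"
  unfolding exp_chart_def by (rule Cl_in_simplex0) simp

lemma log_chart_exp_chart: "\<xi> \<in> tangent0 \<Longrightarrow> log_chart a (exp_chart a \<xi>) = \<xi>"
  by (simp add: exp_chart_def log_chart_Cl log_chart_exp)

lemma exp_chart_log_chart:
  assumes l: "l \<in> simplex0"
  shows "exp_chart a (log_chart a l) = l"
proof -
  define S where "S = (\<Sum>j\<in>UNIV. eC a $ j * ln (l$j)) / (\<Sum>k\<in>UNIV. a$k * eC a $ k)"
  have l_pos: "l$i > 0" for i using l by (simp add: simplex0_def)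
  have "log_chart a l $ i / eC a $ i = ln (l$i) + a$i * (- S)" for i
    using eC_pos[of i] by (simp add: log_chart_def S_def)
  then have "exp (log_chart a l $ i / eC a $ i) = l$i * exp (a$i * (- S))" for i
    using l_pos[of i] by (simp only: exp_add exp_ln)
  then have "(\<chi> i. exp (log_chart a l $ i / eC a $ i)) = (\<chi> i. l$i * exp (a$i * (- S)))"
    by simp
  then show ?thesis
    using Cl_mult_exp[of l "- S"] l_pos Cl_simplex0[OF l] by (simp add: exp_chart_def)
qed

lemma exp_chart_add: "exp_chart a (\<xi> + \<eta>) = oplusC a (exp_chart a \<xi>) (exp_chart a \<eta>)"
proof -
  have "(\<chi> i. exp ((\<xi> + \<eta>)$i / eC a $ i))
      = cmult (\<chi> i. exp (\<xi>$i / eC a $ i)) (\<chi> i. exp (\<eta>$i / eC a $ i))"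
    by (simp add: cmult_def vec_eq_iff add_divide_distrib exp_add)
  then show ?thesis by (simp add: exp_chart_def oplusC_Cl)
qed

lemma exp_chart_0: "exp_chart a 0 = eC a"
  by (simp add: exp_chart_def eC_def one_vec_def)

lemma log_chart_oplusC:
  assumes "l \<in> simplex0" and "m \<in> simplex0"
  shows "log_chart a (oplusC a l m) = log_chart a l + log_chart a m"
proof -
  have l: "l$i > 0" and m: "m$i > 0" for i using assms by (simp_all add: simplex0_def)
  then have "cmult l m $ i > 0" for i by (simp add: cmult_def)
  then show ?thesis by (simp add: oplusC_def log_chart_Cl log_chart_cmult l m)
qed

lemma log_chart_eq_iff:
  "l \<in> simplex0 \<Longrightarrow> m \<in> simplex0 \<Longrightarrow> log_chart a l = log_chart a m \<longleftrightarrow> l = m"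
  by (metis exp_chart_log_chart)

lemma bij_betw_exp_chart: "bij_betw (exp_chart a) tangent0 simplex0"
  by (rule bij_betw_byWitness[where f' = "log_chart a"])
    (auto simp: log_chart_exp_chart exp_chart_log_chart log_chart_in_tangent0 exp_chart_in_simplex0)

lemma bij_betw_log_chart: "bij_betw (log_chart a) simplex0 tangent0"
  by (rule bij_betw_byWitness[where f' = "exp_chart a"])
    (auto simp: log_chart_exp_chart exp_chart_log_chart log_chart_in_tangent0 exp_chart_in_simplex0)

end

section \<open>The exponential map\<close>

lemma weighted_exp_shift_bound:
  fixes e x a :: "'i::finite \<Rightarrow> real"
  assumes e_pos: "\<And>i. e i > 0" and e_sum: "(\<Sum>i\<in>UNIV. e i) = 1"
    and centred: "(\<Sum>i\<in>UNIV. e i * x i) = 0"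
    and a_ge: "\<And>i. \<mu> \<le> a i" and \<mu>: "\<mu> > 0"
    and root: "(\<Sum>i\<in>UNIV. e i * exp (x i + a i * \<delta>)) = 1"
  shows "\<mu> * \<bar>\<delta>\<bar> \<le> (\<Sum>i\<in>UNIV. e i * exp (x i)) - 1"
proof -
  have a_pos: "a i > 0" for i using a_ge[of i] \<mu> by linarith
  have "(\<Sum>i\<in>UNIV. e i * (1 + x i)) \<le> (\<Sum>i\<in>UNIV. e i * exp (x i))"
    using e_pos by (intro sum_mono mult_left_mono) (auto simp: less_imp_le)
  then have excess: "1 \<le> (\<Sum>i\<in>UNIV. e i * exp (x i))"
    by (simp add: distrib_left sum.distrib e_sum centred)
  define W\<^sub>0 where "W\<^sub>0 = (\<Sum>i\<in>UNIV. a i * e i * exp (x i))"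
  have W\<^sub>0: "W\<^sub>0 > 0"
    unfolding W\<^sub>0_def using a_pos e_pos by (intro sum_pos) auto
  have "(\<Sum>i\<in>UNIV. e i * exp (x i) * (1 + a i * \<delta>))
      \<le> (\<Sum>i\<in>UNIV. e i * exp (x i) * exp (a i * \<delta>))"
    using e_pos by (intro sum_mono mult_left_mono) (auto simp: less_imp_le)
  then have "(\<Sum>i\<in>UNIV. e i * exp (x i)) + \<delta> * W\<^sub>0 \<le> 1"
    using root by (simp add: W\<^sub>0_def algebra_simps sum.distrib sum_distrib_left exp_add)
  with excess have "\<delta> * W\<^sub>0 \<le> 0" by linarith
  with W\<^sub>0 have \<delta>_nonpos: "\<delta> \<le> 0" by (simp add: mult_le_0_iff)
  define W where "W = (\<Sum>i\<in>UNIV. a i * e i * exp (x i + a i * \<delta>))"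
  have "(\<Sum>i\<in>UNIV. \<mu> * (e i * exp (x i + a i * \<delta>))) \<le> W"
    unfolding W_def using a_ge e_pos
    by (intro sum_mono) (simp add: mult.assoc mult_right_mono less_imp_le)
  then have W: "\<mu> \<le> W" by (simp add: root flip: sum_distrib_left)
  have "(\<Sum>i\<in>UNIV. e i * exp (x i + a i * \<delta>) * (1 - a i * \<delta>))
      \<le> (\<Sum>i\<in>UNIV. e i * exp (x i + a i * \<delta>) * exp (- (a i * \<delta>)))"
    using e_pos exp_ge_add_one_self[of "- (a _ * \<delta>)"]
    by (intro sum_mono mult_left_mono) (auto simp: less_imp_le)
  then have "1 - \<delta> * W \<le> (\<Sum>i\<in>UNIV. e i * exp (x i))"
    using root by (simp add: W_def algebra_simps sum_subtractf sum_distrib_left flip: exp_add)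
  moreover have "- \<delta> * \<mu> \<le> - \<delta> * W" using W \<delta>_nonpos by (intro mult_left_mono) auto
  ultimately show ?thesis using \<delta>_nonpos by (simp add: algebra_simps)
qed

context sign_definite
begin

lemma t_a_exp_shift_bound:
  assumes \<mu>: "\<mu> > 0" "\<And>i. \<mu> \<le> \<bar>a$i\<bar>" and centred: "(\<Sum>i\<in>UNIV. eC a $ i * x$i) = 0"
  shows "\<mu> * \<bar>t_a a (\<chi> i. exp (x$i)) - t_a a 1\<bar> \<le> (\<Sum>i\<in>UNIV. eC a $ i * exp (x$i)) - 1"
proof -
  define \<delta> where "\<delta> = t_a a (\<chi> i. exp (x$i)) - t_a a 1"
  have "eC a $ i * exp (x$i + a$i * \<delta>) = exp (x$i) * exp (a$i * t_a a (\<chi> i. exp (x$i)))" for i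
    unfolding eC_nth \<delta>_def exp_add[symmetric] by (simp add: algebra_simps)
  then have root: "(\<Sum>i\<in>UNIV. eC a $ i * exp (x$i + a$i * \<delta>)) = 1"
    using t_a_eq[of "\<chi> i. exp (x$i)"] by simp
  have e: "eC a $ i > 0" "(\<Sum>i\<in>UNIV. eC a $ i) = 1" for i
    using eC_in_simplex0 by (simp_all add: simplex0_def)
  have "\<mu> * \<bar>\<delta>\<bar> \<le> (\<Sum>i\<in>UNIV. eC a $ i * exp (x$i)) - 1"
    using sign_definite
  proof
    assume "\<forall>i. a$i > 0"
    then have "\<mu> \<le> a$i" for i using \<mu>(2)[of i] by (simp add: abs_of_pos)
    then show ?thesis
      using weighted_exp_shift_bound[of "\<lambda>i. eC a $ i" "\<lambda>i. x$i" \<mu> "\<lambda>i. a$i" \<delta>]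
        e root centred \<mu>(1) by simp
  next
    assume "\<forall>i. a$i < 0"
    then have "\<mu> \<le> - a$i" for i using \<mu>(2)[of i] by (simp add: abs_of_neg)
    then show ?thesis
      using weighted_exp_shift_bound[of "\<lambda>i. eC a $ i" "\<lambda>i. x$i" \<mu> "\<lambda>i. - a$i" "- \<delta>"]
        e root centred \<mu>(1) by simp
  qed
  then show ?thesis by (simp only: \<delta>_def)
qed

lemma t_a_exp_line_has_derivative_0:
  assumes centred: "(\<Sum>i\<in>UNIV. eC a $ i * c$i) = 0"
  shows "((\<lambda>t. t_a a (\<chi> i. exp (t * c$i))) has_real_derivative 0) (at 0)"
proof -
  obtain \<mu> where \<mu>: "\<mu> > 0" "\<And>i. \<mu> \<le> \<bar>a$i\<bar>" using abs_weights_lower_bound by blast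
  define \<epsilon> where "\<epsilon> t = ((\<Sum>i\<in>UNIV. eC a $ i * exp (t * c$i)) - 1) / \<mu>" for t
  have "(\<epsilon> has_real_derivative (\<Sum>i\<in>UNIV. eC a $ i * c$i) / \<mu>) (at 0)"
    unfolding \<epsilon>_def using \<mu>(1) by (auto intro!: derivative_eq_intros simp: mult.commute)
  then have \<epsilon>': "(\<epsilon> has_real_derivative 0) (at 0)" by (simp add: centred)
  have "\<epsilon> 0 = 0" using eC_in_simplex0 by (simp add: \<epsilon>_def simplex0_def)
  moreover have "(\<chi> i. exp (0 * c$i)) = 1" by (simp add: one_vec_def)
  moreover have "\<bar>t_a a (\<chi> i. exp (t * c$i)) - t_a a 1\<bar> \<le> \<epsilon> t" for t
    using t_a_exp_shift_bound[OF \<mu>, of "t *\<^sub>R c"] centred \<mu>(1)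
    by (simp add: \<epsilon>_def pos_le_divide_eq mult.commute mult.left_commute[of _ t]
        flip: sum_distrib_left)
  ultimately have "\<bar>t_a a (\<chi> i. exp (t * c$i)) - t_a a (\<chi> i. exp (0 * c$i))\<bar>
      \<le> \<bar>\<epsilon> t - \<epsilon> 0\<bar>" for t
    by (metis abs_ge_self diff_zero order_trans)
  then show ?thesis using \<epsilon>' by (rule has_real_derivative_zero_if_dominated)
qed

lemma exp_chart_line_has_vector_derivative:
  assumes \<xi>: "\<xi> \<in> tangent0"
  shows "((\<lambda>t. exp_chart a (t *\<^sub>R \<xi>)) has_vector_derivative \<xi>) (at 0)"
proof (rule has_vector_derivative_cart_componentwise)
  fix i
  define c where "c = (\<chi> j. \<xi>$j / eC a $ j)"
  have e_c: "eC a $ j * c$j = \<xi>$j" for j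
    using eC_pos[of j] by (simp add: c_def)
  then have "(\<Sum>j\<in>UNIV. eC a $ j * c$j) = 0" using \<xi> by (simp add: tangent0_def)
  then have "((\<lambda>t. exp (t * c$i) * exp (a$i * t_a a (\<chi> j. exp (t * c$j)))) has_real_derivative
      c$i * exp (a$i * t_a a 1)) (at 0)"
    by (auto intro!: derivative_eq_intros t_a_exp_line_has_derivative_0 simp: one_vec_def)
  moreover have "exp_chart a (t *\<^sub>R \<xi>) $ i
      = exp (t * c$i) * exp (a$i * t_a a (\<chi> j. exp (t * c$j)))" for t
    by (simp add: exp_chart_def Cl_def c_def)
  ultimately show "((\<lambda>t. exp_chart a (t *\<^sub>R \<xi>) $ i) has_real_derivative \<xi>$i) (at 0)"
    using e_c[of i] by (simp add: eC_nth mult.commute)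
qed

lemma log_chart_curve_has_vector_derivative:
  assumes \<gamma>: "(\<gamma> has_vector_derivative \<xi>) (at 0)" and \<gamma>0: "\<gamma> 0 = eC a"
    and \<xi>: "\<xi> \<in> tangent0"
  shows "((\<lambda>t. log_chart a (\<gamma> t)) has_vector_derivative \<xi>) (at 0)"
proof (rule has_vector_derivative_cart_componentwise)
  fix i
  have "((\<lambda>t. \<gamma> t $ j) has_real_derivative \<xi>$j) (at 0)" for j
    using bounded_linear.has_vector_derivative[OF bounded_linear_vec_nth \<gamma>]
    by (simp add: has_real_derivative_iff_has_vector_derivative)
  then have ln: "((\<lambda>t. ln (\<gamma> t $ j)) has_real_derivative \<xi>$j / eC a $ j) (at 0)" for j
    using \<gamma>0 eC_pos[of j] by (auto intro!: derivative_eq_intros simp: divide_inverse)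
  have "((\<lambda>t. \<Sum>j\<in>UNIV. eC a $ j * ln (\<gamma> t $ j)) has_real_derivative
      (\<Sum>j\<in>UNIV. eC a $ j * (\<xi>$j / eC a $ j))) (at 0)"
    by (intro DERIV_sum DERIV_cmult ln)
  moreover have "(\<Sum>j\<in>UNIV. eC a $ j * (\<xi>$j / eC a $ j)) = 0"
    using \<xi> eC_pos by (simp add: tangent0_def less_imp_neq[symmetric])
  ultimately have S: "((\<lambda>t. \<Sum>j\<in>UNIV. eC a $ j * ln (\<gamma> t $ j)) has_real_derivative 0) (at 0)"
    by simp
  have "((\<lambda>t. eC a $ i * (ln (\<gamma> t $ i) - a$i / (\<Sum>k\<in>UNIV. a$k * eC a $ k) *
                                            (\<Sum>j\<in>UNIV. eC a $ j * ln (\<gamma> t $ j))))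
        has_real_derivative eC a $ i * (\<xi>$i / eC a $ i - a$i / (\<Sum>k\<in>UNIV. a$k * eC a $ k) * 0)) (at 0)"
    by (intro DERIV_cmult DERIV_diff ln S)
  then show "((\<lambda>t. log_chart a (\<gamma> t) $ i) has_real_derivative \<xi>$i) (at 0)"
    using eC_pos[of i] by (simp add: log_chart_def)
qed

lemma one_param_exp_chart_line: "\<xi> \<in> tangent0 \<Longrightarrow> one_param a \<xi> (\<lambda>t. exp_chart a (t *\<^sub>R \<xi>))"
  unfolding one_param_def
  by (simp add: exp_chart_in_simplex0 exp_chart_0 exp_chart_line_has_vector_derivative
      scaleR_add_left exp_chart_add)

lemma one_param_eq_exp_chart_line:
  assumes "one_param a \<xi> \<gamma>" and \<xi>: "\<xi> \<in> tangent0"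
  shows "\<gamma> t = exp_chart a (t *\<^sub>R \<xi>)"
proof -
  have \<gamma>: "\<And>t. \<gamma> t \<in> simplex0" "\<gamma> 0 = eC a" "\<And>s t. \<gamma> (s + t) = oplusC a (\<gamma> s) (\<gamma> t)"
    "(\<gamma> has_vector_derivative \<xi>) (at 0)"
    using assms(1) by (auto simp: one_param_def)
  have "log_chart a (\<gamma> t) = t *\<^sub>R \<xi>"
  proof (rule additive_has_vector_derivative_imp_linear)
    show "log_chart a (\<gamma> (s + t)) = log_chart a (\<gamma> s) + log_chart a (\<gamma> t)" for s t
      using \<gamma>(1) by (simp add: \<gamma>(3) log_chart_oplusC)
    show "((\<lambda>t. log_chart a (\<gamma> t)) has_vector_derivative \<xi>) (at 0)"
      using \<gamma>(4,2) \<xi> by (rule log_chart_curve_has_vector_derivative)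
  qed
  then show ?thesis using exp_chart_log_chart[OF \<gamma>(1)[of t]] by simp
qed

lemma ExpC_eq_exp_chart:
  assumes "\<xi> \<in> tangent0"
  shows "ExpC a \<xi> = exp_chart a \<xi>"
  unfolding ExpC_def
proof (rule the_equality)
  show "\<exists>\<gamma>. one_param a \<xi> \<gamma> \<and> \<gamma> 1 = exp_chart a \<xi>"
    using one_param_exp_chart_line[OF assms] by force
  show "\<exists>\<gamma>. one_param a \<xi> \<gamma> \<and> \<gamma> 1 = l \<Longrightarrow> l = exp_chart a \<xi>" for l
    using one_param_eq_exp_chart_line[OF _ assms, of _ 1] by auto
qed

end

section \<open>Transport of the Euclidean structure\<close>

context sign_definite
begin

lemma LogC_eq_log_chart:
  assumes "l \<in> simplex0"
  shows "LogC a l = log_chart a l"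
  unfolding LogC_def
proof (rule inv_into_f_eq)
  show "inj_on (ExpC a) tangent0"
    using bij_betw_imp_inj_on[OF bij_betw_exp_chart] by (simp add: inj_on_def ExpC_eq_exp_chart)
  show "ExpC a (log_chart a l) = l"
    using assms by (simp add: ExpC_eq_exp_chart log_chart_in_tangent0 exp_chart_log_chart)
qed (rule log_chart_in_tangent0)

lemma smultC_eq_exp_chart:
  assumes "l \<in> simplex0"
  shows "smultC a c l = exp_chart a (c *\<^sub>R log_chart a l)"
  using assms
  by (simp add: smultC_def LogC_eq_log_chart ExpC_eq_exp_chart tangent0_scaleR log_chart_in_tangent0)

lemma log_chart_ominusC:
  assumes l: "l \<in> simplex0" and m: "m \<in> simplex0"
  shows "log_chart a (ominusC a l m) = log_chart a l - log_chart a m"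
proof -
  have "smultC a (-1) m = exp_chart a (- log_chart a m)"
    using m by (simp add: smultC_eq_exp_chart)
  moreover have "- log_chart a m \<in> tangent0"
    using tangent0_scaleR[OF log_chart_in_tangent0, of "-1"] by simp
  ultimately show ?thesis
    using l by (simp add: ominusC_def log_chart_oplusC exp_chart_in_simplex0 log_chart_exp_chart)
qed

lemma distC_eq_dist:
  assumes "l \<in> simplex0" and "m \<in> simplex0"
  shows "distC a l m = dist (log_chart a l) (log_chart a m)"
proof -
  have "ominusC a l m \<in> simplex0"
    unfolding ominusC_def smultC_eq_exp_chart[OF assms(2)]
    using assms(1) by (rule oplusC_in_simplex0) (rule exp_chart_in_simplex0)
  then show ?thesis
    using assms by (simp add: distC_def normC_def innerC_def LogC_eq_log_chart log_chart_ominusC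
        dist_norm norm_eq_sqrt_inner)
qed

lemma bij_betw_LogC: "bij_betw (LogC a) simplex0 tangent0"
  by (rule bij_betw_cong[THEN iffD2, OF _ bij_betw_log_chart]) (rule LogC_eq_log_chart)

lemma bij_betw_ExpC: "bij_betw (ExpC a) tangent0 simplex0"
  by (rule bij_betw_cong[THEN iffD2, OF _ bij_betw_exp_chart]) (rule ExpC_eq_exp_chart)

lemma LogC_oplusC:
  "l \<in> simplex0 \<Longrightarrow> m \<in> simplex0 \<Longrightarrow> LogC a (oplusC a l m) = LogC a l + LogC a m"
  by (simp add: LogC_eq_log_chart oplusC_in_simplex0 log_chart_oplusC)

lemma LogC_smultC: "l \<in> simplex0 \<Longrightarrow> LogC a (smultC a c l) = c *\<^sub>R LogC a l"
  by (simp add: LogC_eq_log_chart smultC_eq_exp_chart exp_chart_in_simplex0 log_chart_exp_chart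
      tangent0_scaleR log_chart_in_tangent0)

lemma ExpC_add:
  "\<xi> \<in> tangent0 \<Longrightarrow> \<eta> \<in> tangent0 \<Longrightarrow> ExpC a (\<xi> + \<eta>) = oplusC a (ExpC a \<xi>) (ExpC a \<eta>)"
  by (simp add: ExpC_eq_exp_chart tangent0_add exp_chart_add)

lemma ExpC_scaleR: "\<xi> \<in> tangent0 \<Longrightarrow> ExpC a (c *\<^sub>R \<xi>) = smultC a c (ExpC a \<xi>)"
  by (simp add: ExpC_eq_exp_chart tangent0_scaleR smultC_eq_exp_chart exp_chart_in_simplex0
      log_chart_exp_chart)

lemma innerC_ExpC:
  "\<xi> \<in> tangent0 \<Longrightarrow> \<eta> \<in> tangent0 \<Longrightarrow> innerC a (ExpC a \<xi>) (ExpC a \<eta>) = \<xi> \<bullet> \<eta>"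
  by (simp add: innerC_def ExpC_eq_exp_chart exp_chart_in_simplex0 LogC_eq_log_chart log_chart_exp_chart)

lemma distC_nonneg: "l \<in> simplex0 \<Longrightarrow> m \<in> simplex0 \<Longrightarrow> 0 \<le> distC a l m"
  by (simp add: distC_eq_dist)

lemma distC_eq_0_iff: "l \<in> simplex0 \<Longrightarrow> m \<in> simplex0 \<Longrightarrow> distC a l m = 0 \<longleftrightarrow> l = m"
  by (simp add: distC_eq_dist log_chart_eq_iff)

lemma distC_commute: "l \<in> simplex0 \<Longrightarrow> m \<in> simplex0 \<Longrightarrow> distC a l m = distC a m l"
  by (simp add: distC_eq_dist dist_commute)

lemma distC_triangle:
  "l \<in> simplex0 \<Longrightarrow> m \<in> simplex0 \<Longrightarrow> g \<in> simplex0 \<Longrightarrow> distC a l g \<le> distC a l m + distC a m g"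
  by (simp add: distC_eq_dist dist_triangle)

lemma distC_oplusC_left:
  assumes "g \<in> simplex0" "l \<in> simplex0" "m \<in> simplex0"
  shows "distC a (oplusC a g l) (oplusC a g m) = distC a l m"
  using assms by (simp add: distC_eq_dist oplusC_in_simplex0 log_chart_oplusC)

lemma log_chart_diff_nth:
  assumes l: "l \<in> simplex0" and m: "m \<in> simplex0"
  shows "log_chart a l $ i - log_chart a m $ i =
    eC a $ i * (ln (l$i / m$i) - a$i / (\<Sum>k\<in>UNIV. a$k * eC a $ k) *
                                  (\<Sum>j\<in>UNIV. eC a $ j * ln (l$j / m$j)))"
proof -
  have "l$j > 0" "m$j > 0" for j using l m by (simp_all add: simplex0_def)
  then have ln_div: "ln (l$j / m$j) = ln (l$j) - ln (m$j)" for j by (simp add: ln_divide_pos)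
  show ?thesis
    by (simp add: log_chart_def ln_div sum_subtractf algebra_simps)
qed

lemma distC_power2:
  assumes "l \<in> simplex0" and "m \<in> simplex0"
  shows "(distC a l m)\<^sup>2 =
    (\<Sum>i\<in>UNIV. (eC a $ i)\<^sup>2 *
       (ln (l$i / m$i) - a$i / (\<Sum>k\<in>UNIV. a$k * eC a $ k) *
                          (\<Sum>j\<in>UNIV. eC a $ j * ln (l$j / m$j)))\<^sup>2)"
  using assms
  by (simp add: distC_eq_dist dist_norm power2_norm_eq_inner inner_vec_def log_chart_diff_nth
      power_mult_distrib flip: power2_eq_square)

end

theorem theorem2:
  fixes a :: "real^'n"
  assumes N: "CARD('n) \<ge> 2"
    and sgn: "(\<forall>i. a$i > 0) \<or> (\<forall>i. a$i < 0)"
  shows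
    \<comment> \<open>distance on the simplex\<close>
    "(\<forall>l\<in>simplex0. \<forall>m\<in>simplex0. distC a l m \<ge> 0 \<and> (distC a l m = 0 \<longleftrightarrow> l = m)
         \<and> distC a l m = distC a m l) \<and>
     (\<forall>l\<in>simplex0. \<forall>m\<in>simplex0. \<forall>g\<in>simplex0. distC a l g \<le> distC a l m + distC a m g) \<and>
     \<comment> \<open>(i) bi-invariance\<close>
     (\<forall>g\<in>simplex0. \<forall>l\<in>simplex0. \<forall>m\<in>simplex0.
         distC a (oplusC a g l) (oplusC a g m) = distC a l m) \<and>
     \<comment> \<open>(ii) Log is a linear isometry from the simplex onto the tangent space\<close>
     bij_betw (LogC a) simplex0 tangent0 \<and>
     (\<forall>l\<in>simplex0. \<forall>m\<in>simplex0. LogC a (oplusC a l m) = LogC a l + LogC a m) \<and>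
     (\<forall>c::real. \<forall>l\<in>simplex0. LogC a (smultC a c l) = c *\<^sub>R LogC a l) \<and>
     (\<forall>l\<in>simplex0. \<forall>m\<in>simplex0. LogC a l \<bullet> LogC a m = innerC a l m) \<and>
     \<comment> \<open>(ii) Exp is a linear isometry from the tangent space onto the simplex\<close>
     bij_betw (ExpC a) tangent0 simplex0 \<and>
     (\<forall>\<xi>\<in>tangent0. \<forall>\<eta>\<in>tangent0. ExpC a (\<xi> + \<eta>) = oplusC a (ExpC a \<xi>) (ExpC a \<eta>)) \<and>
     (\<forall>c::real. \<forall>\<xi>\<in>tangent0. ExpC a (c *\<^sub>R \<xi>) = smultC a c (ExpC a \<xi>)) \<and>
     (\<forall>\<xi>\<in>tangent0. \<forall>\<eta>\<in>tangent0. innerC a (ExpC a \<xi>) (ExpC a \<eta>) = \<xi> \<bullet> \<eta>) \<and>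
     \<comment> \<open>(iii) explicit formula\<close>
     (\<forall>l\<in>simplex0. \<forall>m\<in>simplex0.
        (distC a l m)\<^sup>2 =
          (\<Sum>i\<in>UNIV. ((eC a)$i)\<^sup>2 *
             (ln (l$i / m$i) - a$i / (\<Sum>k\<in>UNIV. a$k * (eC a)$k) *
                (\<Sum>j\<in>UNIV. (eC a)$j * ln (l$j / m$j)))\<^sup>2))"
proof -
  interpret sign_definite a by unfold_locales (rule sgn)
  show ?thesis
    by (intro conjI ballI allI)
      (simp_all add: distC_nonneg distC_eq_0_iff distC_commute distC_triangle distC_oplusC_left
        bij_betw_LogC LogC_oplusC LogC_smultC bij_betw_ExpC ExpC_add ExpC_scaleR innerC_ExpC
        distC_power2 flip: innerC_def)
qed

end
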